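(* Let $G(a,b,\lambda)$ and $H(a,b,\lambda)$ be polynomials in $a,b$ whose coefficients are Laurent polynomials in $\lambda$, and let $g=G(\varphi,\varphi',\lambda)$, $h=H(\varphi,\varphi',\lambda)$ (with $\varphi=\varphi(\lambda)$, $\varphi'=d\varphi/d\lambda$) be formal series in $\lambda$ of lowest order $\ge1$, i.e. containing only positive powers of $\lambda$. Then $$[\partial_g,\partial_h]=\partial_{\{g,h\}},\qquad \{g,h\}=h_\varphi\,g-g_\varphi\,h+h_{\varphi'}\,D_\lambda g-g_{\varphi'}\,D_\lambda h,$$ where $g_\varphi=(\partial G/\partial a)(\varphi,\varphi',\lambda)$, $g_{\varphi'}=(\partial G/\partial b)(\varphi,\varphi',\lambda)$ (similarly for $h$), and $D_\lambda$ denotes the derivative $d/d\lambda$ of a formal series in $\lambda$.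
   Context: $\varphi^{(1)},\varphi^{(2)},\dots$ are independent variables and $\varphi(\lambda)=1/\lambda+\sum_{k\ge1}\varphi^{(k)}\lambda^k$, a formal Laurent series with coefficients in $R=\mathbb R[\varphi^{(1)},\varphi^{(2)},\dots]$. For a series $f=\sum_{i\ge1}f^{(i)}\lambda^i$ with $f^{(i)}\in R$, $\partial_f$ denotes the derivation $\sum_{i\ge1}f^{(i)}\partial/\partial\varphi^{(i)}$ of $R$, acting on series coefficientwise. *)

theory Defs
  imports "HOL-Library.Poly_Mapping" "HOL-Computational_Algebra.Formal_Laurent_Series"
begin

text \<open>The ring R = real[phi1, phi2, ...]: polynomials in countably many variables,
  represented as finitely supported maps from monomials (exponent vectors) to coefficients.
  Poly-mapping variable number k-1 stands for phi^(k) (k >= 1).\<close>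
type_synonym R = "(nat \<Rightarrow>\<^sub>0 nat) \<Rightarrow>\<^sub>0 real"

definition Rconst :: "real \<Rightarrow> R" where
  "Rconst r = Poly_Mapping.single 0 r"

definition Rvar :: "nat \<Rightarrow> R" where
  "Rvar k = Poly_Mapping.single (Poly_Mapping.single (k - 1) 1) 1"

definition pdiff :: "nat \<Rightarrow> R \<Rightarrow> R" where
  "pdiff k p = (\<Sum>m\<in>Poly_Mapping.keys p. Poly_Mapping.single (m - Poly_Mapping.single (k - 1) 1)
                     (of_nat (Poly_Mapping.lookup (m :: nat \<Rightarrow>\<^sub>0 nat) (k - 1)) * Poly_Mapping.lookup p m))"

text \<open>Indices (0-based) of the variables occurring in p.\<close>
definition Rvars :: "R \<Rightarrow> nat set" where
  "Rvars p = \<Union> (Poly_Mapping.keys ` Poly_Mapping.keys p)"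

text \<open>The derivation partial_f = sum_{i>=1} f^(i) d/dphi^(i); on a given p only the finitely
  many variables occurring in p contribute.\<close>
definition der :: "R fls \<Rightarrow> R \<Rightarrow> R" where
  "der f p = (\<Sum>i\<in>Suc ` Rvars p. fls_nth f (int i) * pdiff i p)"

definition phi :: "R fls" where
  "phi = Abs_fls (\<lambda>n. if n = -1 then 1 else if n \<ge> 1 then Rvar (nat n) else 0)"

definition phi' :: "R fls" where
  "phi' = fls_deriv phi"

text \<open>A polynomial G(a,b,lambda) = sum_{i,j<=N} sum_{-M<=k<=M} c i j k lambda^k a^i b^j
  (polynomial in a,b with real Laurent-polynomial coefficients), evaluated at series a, b,
  together with its formal partial derivatives in a and b.\<close>
definition evalP :: "nat \<Rightarrow> nat \<Rightarrow> (nat \<Rightarrow> nat \<Rightarrow> int \<Rightarrow> real) \<Rightarrow> R fls \<Rightarrow> R fls \<Rightarrow> R fls" where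
  "evalP N M c a b = (\<Sum>i\<le>N. \<Sum>j\<le>N. \<Sum>k\<in>{- int M..int M}.
       fls_const (Rconst (c i j k)) * fls_X_intpow k * a ^ i * b ^ j)"

definition evalP_a :: "nat \<Rightarrow> nat \<Rightarrow> (nat \<Rightarrow> nat \<Rightarrow> int \<Rightarrow> real) \<Rightarrow> R fls \<Rightarrow> R fls \<Rightarrow> R fls" where
  "evalP_a N M c a b = (\<Sum>i\<le>N. \<Sum>j\<le>N. \<Sum>k\<in>{- int M..int M}.
       of_nat i * fls_const (Rconst (c i j k)) * fls_X_intpow k * a ^ (i - 1) * b ^ j)"

definition evalP_b :: "nat \<Rightarrow> nat \<Rightarrow> (nat \<Rightarrow> nat \<Rightarrow> int \<Rightarrow> real) \<Rightarrow> R fls \<Rightarrow> R fls \<Rightarrow> R fls" where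
  "evalP_b N M c a b = (\<Sum>i\<le>N. \<Sum>j\<le>N. \<Sum>k\<in>{- int M..int M}.
       of_nat j * fls_const (Rconst (c i j k)) * fls_X_intpow k * a ^ i * b ^ (j - 1))"

end

theory Submission
  imports Defs
begin

text \<open>Each \<open>der f\<close> is a derivation of \<open>R\<close>, hence so is the commutator \<open>[der g, der h]\<close>.
  A derivation is determined by its values on the variables, and on the \<open>i\<close>-th variable the
  commutator takes the value \<open>der g h\<^sub>i - der h g\<^sub>i\<close> (\<open>g\<^sub>i\<close>, \<open>h\<^sub>i\<close> the \<open>i\<close>-th coefficients); so
  \<open>[der g, der h] = der (\<partial>\<^sub>g h - \<partial>\<^sub>h g)\<close>, where \<open>\<partial>\<^sub>f = der_fls f\<close> acts on series coefficientwise. This extension \<open>\<partial>\<^sub>f\<close> is a derivation of \<open>R((\<lambda>))\<close> commuting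
  with \<open>D\<^sub>\<lambda>\<close>, and it sends \<open>\<phi>\<close> to \<open>f\<close> when \<open>f\<close> has only positive powers, hence \<open>\<phi>'\<close> to \<open>D\<^sub>\<lambda> f\<close>.
  The chain rule for \<open>H(\<phi>,\<phi>',\<lambda>)\<close> then gives \<open>\<partial>\<^sub>g h = h\<^sub>\<phi> g + h\<^sub>\<phi>\<^sub>' D\<^sub>\<lambda> g\<close>.\<close>

unbundle fps_syntax

abbreviation var_exponent :: "nat \<Rightarrow> nat \<Rightarrow>\<^sub>0 nat" where
  "var_exponent k \<equiv> Poly_Mapping.single (k - 1) 1"

lemma poly_mapping_sum_single_lookup:
  "(\<Sum>m\<in>Poly_Mapping.keys p. Poly_Mapping.single m (Poly_Mapping.lookup p m)) = p"
proof (rule poly_mapping_eqI)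
  fix k
  show "Poly_Mapping.lookup (\<Sum>m\<in>Poly_Mapping.keys p. Poly_Mapping.single m (Poly_Mapping.lookup p m)) k
      = Poly_Mapping.lookup p k"
    by (cases "k \<in> Poly_Mapping.keys p")
       (auto simp: lookup_sum lookup_single when_def in_keys_iff cong: sum.cong)
qed

lemma pdiff_eq_sum_superset:
  assumes "finite A" "Poly_Mapping.keys p \<subseteq> A"
  shows "pdiff k p = (\<Sum>m\<in>A. Poly_Mapping.single (m - var_exponent k)
                     (of_nat (Poly_Mapping.lookup m (k - 1)) * Poly_Mapping.lookup p m))"
  unfolding pdiff_def
  by (rule sum.mono_neutral_left) (use assms in \<open>auto simp: in_keys_iff\<close>)

lemma pdiff_single:
  "pdiff k (Poly_Mapping.single m c)
   = Poly_Mapping.single (m - var_exponent k) (of_nat (Poly_Mapping.lookup m (k - 1)) * c)"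
  by (subst pdiff_eq_sum_superset[of "{m}"]) auto

lemma pdiff_add: "pdiff k (p + q) = pdiff k p + pdiff k q"
proof -
  let ?A = "Poly_Mapping.keys p \<union> Poly_Mapping.keys q"
  have "pdiff k (p + q) = (\<Sum>m\<in>?A. Poly_Mapping.single (m - var_exponent k)
                     (of_nat (Poly_Mapping.lookup m (k - 1)) * Poly_Mapping.lookup (p + q) m))"
    by (rule pdiff_eq_sum_superset) (auto dest: keys_add[THEN subsetD])
  then show ?thesis
    using pdiff_eq_sum_superset[of ?A p k] pdiff_eq_sum_superset[of ?A q k]
    by (auto simp: lookup_add distrib_left single_add sum.distrib)
qed

lemma pdiff_zero [simp]: "pdiff k 0 = 0"
  by (simp add: pdiff_def)

lemma pdiff_sum: "pdiff k (sum f A) = (\<Sum>x\<in>A. pdiff k (f x))"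
  by (induction A rule: infinite_finite_induct) (auto simp: pdiff_add)

lemma pdiff_single_mult_single:
  "pdiff k (Poly_Mapping.single m a) * Poly_Mapping.single n b
   = Poly_Mapping.single (m + n - var_exponent k)
       (of_nat (Poly_Mapping.lookup m (k - 1)) * (a * b))"
proof (cases "Poly_Mapping.lookup m (k - 1) = 0")
  case False
  then have "m - var_exponent k + n = m + n - var_exponent k"
    by (intro poly_mapping_eqI) (auto simp: lookup_add lookup_minus lookup_single when_def)
  then show ?thesis
    by (simp add: pdiff_single mult_single mult.assoc)
qed (simp add: pdiff_single)

lemma pdiff_mult_single:
  "pdiff k (Poly_Mapping.single m a * Poly_Mapping.single n b)
   = pdiff k (Poly_Mapping.single m a) * Poly_Mapping.single n b
     + Poly_Mapping.single m a * pdiff k (Poly_Mapping.single n b)"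
proof -
  let ?e = "m + n - var_exponent k"
  have "pdiff k (Poly_Mapping.single m a * Poly_Mapping.single n b)
      = Poly_Mapping.single ?e (of_nat (Poly_Mapping.lookup m (k - 1)) * (a * b))
        + Poly_Mapping.single ?e (of_nat (Poly_Mapping.lookup n (k - 1)) * (a * b))"
    by (simp add: mult_single pdiff_single lookup_add distrib_right flip: single_add)
  also have "\<dots> = pdiff k (Poly_Mapping.single m a) * Poly_Mapping.single n b
      + Poly_Mapping.single m a * pdiff k (Poly_Mapping.single n b)"
    using pdiff_single_mult_single[of k m a n b] pdiff_single_mult_single[of k n b m a]
    by (simp add: add.commute mult.commute)
  finally show ?thesis .
qed

lemma pdiff_mult: "pdiff k (p * q) = pdiff k p * q + p * pdiff k (q::R)"
proof -
  let ?P = "\<lambda>m. Poly_Mapping.single m (Poly_Mapping.lookup p m)"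
  let ?Q = "\<lambda>m. Poly_Mapping.single m (Poly_Mapping.lookup q m)"
  have pq: "p * q = (\<Sum>m\<in>Poly_Mapping.keys p. \<Sum>n\<in>Poly_Mapping.keys q. ?P m * ?Q n)"
    by (simp only: poly_mapping_sum_single_lookup flip: sum_product)
  show ?thesis
    unfolding pq pdiff_sum pdiff_mult_single sum.distrib
    by (simp add: poly_mapping_sum_single_lookup flip: sum_product pdiff_sum)
qed

lemma pdiff_commute: "pdiff i (pdiff j p) = pdiff j (pdiff i p)"
proof -
  have twice: "pdiff i (pdiff j p) = (\<Sum>m\<in>Poly_Mapping.keys p.
      Poly_Mapping.single (m - var_exponent j - var_exponent i)
        (of_nat (Poly_Mapping.lookup (m - var_exponent j) (i - 1) * Poly_Mapping.lookup m (j - 1))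
         * Poly_Mapping.lookup p m))" for i j
    by (simp add: pdiff_def[of j p] pdiff_sum pdiff_single mult.assoc)
  have "m - var_exponent j - var_exponent i = m - var_exponent i - var_exponent j"
    for m :: "nat \<Rightarrow>\<^sub>0 nat"
    by (intro poly_mapping_eqI) (auto simp: lookup_minus)
  moreover have "Poly_Mapping.lookup (m - var_exponent j) (i - 1) * Poly_Mapping.lookup m (j - 1)
      = Poly_Mapping.lookup (m - var_exponent i) (j - 1) * Poly_Mapping.lookup m (i - 1)"
    for m :: "nat \<Rightarrow>\<^sub>0 nat"
    by (cases "i - 1 = j - 1") (auto simp: lookup_minus lookup_single when_def)
  ultimately show ?thesis
    unfolding twice by simp
qed

lemma finite_Rvars [simp]: "finite (Rvars p)"
  by (simp add: Rvars_def)

lemma Rvars_empty_iff: "Rvars p = {} \<longleftrightarrow> Poly_Mapping.keys p \<subseteq> {0}"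
  by (auto simp: Rvars_def)

lemma Rvars_add: "Rvars (p + q) \<subseteq> Rvars p \<union> Rvars q"
  unfolding Rvars_def using keys_add[of p q] by blast

lemma Rvars_mult: "Rvars (p * q) \<subseteq> Rvars p \<union> Rvars (q::R)"
proof
  fix x assume "x \<in> Rvars (p * q)"
  then obtain m where m: "m \<in> Poly_Mapping.keys (p * q)" "x \<in> Poly_Mapping.keys m"
    by (auto simp: Rvars_def)
  then obtain a b where "m = a + b" "a \<in> Poly_Mapping.keys p" "b \<in> Poly_Mapping.keys q"
    using keys_mult[of p q] by blast
  with m(2) show "x \<in> Rvars p \<union> Rvars q"
    using keys_add[of a b] by (auto simp: Rvars_def)
qed

lemma Rvars_pdiff: "Rvars (pdiff k p) \<subseteq> Rvars p"
proof
  fix x assume "x \<in> Rvars (pdiff k p)"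
  then obtain m where m: "m \<in> Poly_Mapping.keys (pdiff k p)" "x \<in> Poly_Mapping.keys m"
    by (auto simp: Rvars_def)
  from m(1) obtain m0 where m0: "m0 \<in> Poly_Mapping.keys p" "m = m0 - var_exponent k"
    unfolding pdiff_def using keys_sum by (fastforce split: if_splits)
  have "x \<in> Poly_Mapping.keys m0"
    using m(2) m0(2) by (auto simp: in_keys_iff lookup_minus)
  with m0(1) show "x \<in> Rvars p"
    by (auto simp: Rvars_def)
qed

lemma pdiff_eq_0_if_not_in_Rvars: "k - 1 \<notin> Rvars p \<Longrightarrow> pdiff k p = 0"
  unfolding pdiff_def Rvars_def by (intro sum.neutral) (auto simp: in_keys_iff)

lemma der_eq_sum_superset:
  assumes "finite S" "0 \<notin> S" "Suc ` Rvars p \<subseteq> S"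
  shows "der f p = (\<Sum>i\<in>S. f $$ int i * pdiff i p)"
  unfolding der_def
proof (rule sum.mono_neutral_left)
  show "\<forall>i\<in>S - Suc ` Rvars p. f $$ int i * pdiff i p = 0"
  proof
    fix i assume i: "i \<in> S - Suc ` Rvars p"
    with assms(2) have "i = Suc (i - 1)"
      by (cases i) auto
    with i have "i - 1 \<notin> Rvars p"
      by (metis DiffD2 imageI)
    then show "f $$ int i * pdiff i p = 0"
      by (simp add: pdiff_eq_0_if_not_in_Rvars)
  qed
qed (use assms in auto)

lemma der_Rvars_empty: "Rvars p = {} \<Longrightarrow> der f p = 0"
  by (simp add: der_def)

lemma der_zero [simp]: "der f 0 = 0"
  by (simp add: der_Rvars_empty Rvars_empty_iff)

lemma der_add: "der f (p + q) = der f p + der f q"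
proof -
  let ?S = "Suc ` (Rvars p \<union> Rvars q)"
  have "der f (p + q) = (\<Sum>i\<in>?S. f $$ int i * pdiff i (p + q))"
    using Rvars_add[of p q] by (intro der_eq_sum_superset) auto
  also have "\<dots> = (\<Sum>i\<in>?S. f $$ int i * pdiff i p) + (\<Sum>i\<in>?S. f $$ int i * pdiff i q)"
    by (simp add: pdiff_add distrib_left sum.distrib)
  also have "\<dots> = der f p + der f q"
    by (subst (1 2) der_eq_sum_superset[symmetric]) auto
  finally show ?thesis .
qed

lemma der_sum: "der f (sum F A) = (\<Sum>x\<in>A. der f (F x))"
  by (induction A rule: infinite_finite_induct) (auto simp: der_add)

lemma der_mult: "der f (p * q) = der f p * q + p * der f q"
proof -
  let ?S = "Suc ` (Rvars p \<union> Rvars q)"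
  have "der f (p * q) = (\<Sum>i\<in>?S. f $$ int i * pdiff i (p * q))"
    using Rvars_mult[of p q] by (intro der_eq_sum_superset) auto
  also have "\<dots> = (\<Sum>i\<in>?S. f $$ int i * pdiff i p) * q + p * (\<Sum>i\<in>?S. f $$ int i * pdiff i q)"
    by (simp add: pdiff_mult algebra_simps sum.distrib sum_distrib_left sum_distrib_right)
  also have "\<dots> = der f p * q + p * der f q"
    by (subst (1 2) der_eq_sum_superset[symmetric]) auto
  finally show ?thesis .
qed

lemma der_of_int_mult: "der f (of_int k * p) = of_int k * der f p"
  by (simp add: der_mult der_Rvars_empty Rvars_empty_iff flip: single_of_int)

lemma der_Rvar: "n \<ge> 1 \<Longrightarrow> der f (Rvar n) = f $$ int n"
  by (subst der_eq_sum_superset[of "{n}"]) (auto simp: Rvars_def Rvar_def pdiff_single)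

definition der_fls :: "R fls \<Rightarrow> R fls \<Rightarrow> R fls" where
  "der_fls f s = Abs_fls (\<lambda>n. der f (s $$ n))"

lemma der_fls_nth [simp]: "der_fls f s $$ n = der f (s $$ n)"
  unfolding der_fls_def
  by (rule nth_Abs_fls, rule eventually_mono[OF MOST_fls_neg_nth_eq_0[of s]]) simp

lemma der_commutator:
  "der g (der h p) - der h (der g p) = der (der_fls g h - der_fls h g) p"
proof -
  let ?S = "Suc ` Rvars p"
  have der_p: "der f p = (\<Sum>i\<in>?S. f $$ int i * pdiff i p)" for f
    by (rule der_eq_sum_superset) auto
  have der_pdiff: "der f (pdiff j p) = (\<Sum>i\<in>?S. f $$ int i * pdiff i (pdiff j p))" for f j
    by (rule der_eq_sum_superset) (use Rvars_pdiff[of j p] in auto)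
  have expand: "der f1 (der f2 p) = (\<Sum>j\<in>?S. der f1 (f2 $$ int j) * pdiff j p)
      + (\<Sum>j\<in>?S. \<Sum>i\<in>?S. f2 $$ int j * f1 $$ int i * pdiff i (pdiff j p))" for f1 f2
    by (simp add: der_p[of f2] der_sum der_mult der_pdiff sum.distrib sum_distrib_left mult.assoc)
  have "(\<Sum>j\<in>?S. \<Sum>i\<in>?S. h $$ int j * g $$ int i * pdiff i (pdiff j p))
      = (\<Sum>j\<in>?S. \<Sum>i\<in>?S. g $$ int j * h $$ int i * pdiff i (pdiff j p))"
    by (subst sum.swap) (simp add: pdiff_commute mult.commute)
  then show ?thesis
    unfolding expand by (simp add: der_p sum_subtractf left_diff_distrib)
qed

lemma fls_times_nth_lower_bounds:
  fixes f g :: "'a::comm_ring_1 fls"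
  assumes "\<And>i. i < a \<Longrightarrow> f $$ i = 0" "\<And>i. i < b \<Longrightarrow> g $$ i = 0"
  shows "(f * g) $$ n = (\<Sum>i=a..n-b. f $$ i * g $$ (n - i))"
proof (cases "f = 0 \<or> g = 0")
  case False
  then have a: "a \<le> fls_subdegree f" and b: "b \<le> fls_subdegree g"
    using assms by (auto intro: fls_subdegree_geI)
  have "(f * g) $$ n = (\<Sum>i=fls_subdegree f..n - fls_subdegree g. f $$ i * g $$ (n - i))"
    by (rule fls_times_nth(2))
  also have "\<dots> = (\<Sum>i=a..n-b. f $$ i * g $$ (n - i))"
    by (rule sum.mono_neutral_left) (use a b in \<open>auto simp: not_le\<close>)
  finally show ?thesis .
qed auto

lemma der_fls_add: "der_fls f (s + t) = der_fls f s + der_fls f t"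
  by (rule fls_eqI) (simp add: der_add)

lemma der_fls_zero [simp]: "der_fls f 0 = 0"
  by (rule fls_eqI) simp

lemma der_fls_sum: "der_fls f (sum F A) = (\<Sum>x\<in>A. der_fls f (F x))"
  by (induction A rule: infinite_finite_induct) (simp_all add: der_fls_add)

lemma der_fls_mult: "der_fls f (s * t) = der_fls f s * t + s * der_fls f t"
proof (rule fls_eqI)
  fix n
  let ?a = "fls_subdegree s" and ?b = "fls_subdegree t"
  have "der_fls f (s * t) $$ n = der f (\<Sum>i=?a..n-?b. s $$ i * t $$ (n - i))"
    by (simp add: fls_times_nth_lower_bounds[of ?a s ?b t])
  also have "\<dots> = (\<Sum>i=?a..n-?b. der f (s $$ i) * t $$ (n - i))
      + (\<Sum>i=?a..n-?b. s $$ i * der f (t $$ (n - i)))"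
    by (simp add: der_sum der_mult sum.distrib)
  also have "\<dots> = (der_fls f s * t + s * der_fls f t) $$ n"
    by (simp add: fls_times_nth_lower_bounds[of ?a "der_fls f s" ?b t]
                  fls_times_nth_lower_bounds[of ?a s ?b "der_fls f t"])
  finally show "der_fls f (s * t) $$ n = (der_fls f s * t + s * der_fls f t) $$ n" .
qed

lemma der_fls_eq_0: "(\<And>n. Rvars (s $$ n) = {}) \<Longrightarrow> der_fls f s = 0"
  by (rule fls_eqI) (simp add: der_Rvars_empty)

lemma der_fls_power: "der_fls f (s ^ n) = of_nat n * s ^ (n - 1) * der_fls f s"
proof (induction n)
  case 0
  show ?case by (simp add: der_fls_eq_0 Rvars_empty_iff)
next
  case (Suc n)
  then show ?case
    by (cases n) (simp_all add: der_fls_mult algebra_simps)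
qed

lemma der_fls_deriv: "der_fls f (fls_deriv s) = fls_deriv (der_fls f s)"
  by (rule fls_eqI) (simp only: fls_deriv_nth der_fls_nth der_of_int_mult)

lemma phi_nth: "phi $$ n = (if n = -1 then 1 else if n \<ge> 1 then Rvar (nat n) else 0)"
  unfolding phi_def by (rule nth_Abs_fls_lower_bound[where N="-1"]) auto

lemma der_fls_phi:
  assumes "\<forall>n\<le>0. f $$ n = 0"
  shows "der_fls f phi = f"
proof (rule fls_eqI)
  fix n :: int
  show "der_fls f phi $$ n = f $$ n"
    using assms by (cases "n \<ge> 1") (simp_all add: phi_nth der_Rvar der_Rvars_empty Rvars_empty_iff)
qed

lemma der_fls_phi':
  assumes "\<forall>n\<le>0. f $$ n = 0"
  shows "der_fls f phi' = fls_deriv f"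
  unfolding phi'_def der_fls_deriv der_fls_phi[OF assms] ..

lemma der_fls_monomial:
  "der_fls f (fls_const (Rconst c) * fls_X_intpow k * a ^ i * b ^ j)
   = (of_nat i * fls_const (Rconst c) * fls_X_intpow k * a ^ (i - 1) * b ^ j) * der_fls f a
   + (of_nat j * fls_const (Rconst c) * fls_X_intpow k * a ^ i * b ^ (j - 1)) * der_fls f b"
proof -
  have "der_fls f (fls_const (Rconst c)) = 0" "der_fls f (fls_X_intpow k) = 0"
    by (rule der_fls_eq_0, simp add: Rvars_empty_iff Rconst_def)+
  then show ?thesis
    by (simp add: der_fls_mult der_fls_power algebra_simps)
qed

lemma der_fls_evalP:
  "der_fls f (evalP N M c a b) = evalP_a N M c a b * der_fls f a + evalP_b N M c a b * der_fls f b"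
  unfolding evalP_def evalP_a_def evalP_b_def
  by (simp add: der_fls_sum der_fls_monomial sum.distrib sum_distrib_right)

theorem mainTheorem16:
  fixes NG MG NH MH :: nat and cG cH :: "nat \<Rightarrow> nat \<Rightarrow> int \<Rightarrow> real"
  defines "g \<equiv> evalP NG MG cG phi phi'"
      and "h \<equiv> evalP NH MH cH phi phi'"
  assumes "\<forall>n::int. n \<le> 0 \<longrightarrow> fls_nth g n = 0"
      and "\<forall>n::int. n \<le> 0 \<longrightarrow> fls_nth h n = 0"
  shows "\<forall>p. der g (der h p) - der h (der g p)
            = der (evalP_a NH MH cH phi phi' * g - evalP_a NG MG cG phi phi' * h
                   + evalP_b NH MH cH phi phi' * fls_deriv g
                   - evalP_b NG MG cG phi phi' * fls_deriv h) p"
proof -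
  have "der_fls g h = evalP_a NH MH cH phi phi' * g + evalP_b NH MH cH phi phi' * fls_deriv g"
    unfolding h_def der_fls_evalP der_fls_phi[OF assms(3)] der_fls_phi'[OF assms(3)] ..
  moreover have "der_fls h g = evalP_a NG MG cG phi phi' * h + evalP_b NG MG cG phi phi' * fls_deriv h"
    unfolding g_def der_fls_evalP der_fls_phi[OF assms(4)] der_fls_phi'[OF assms(4)] ..
  ultimately show ?thesis
    by (simp add: der_commutator algebra_simps)
qed

end
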